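(* Fix an integer $N\ge 4$, and let $x_1\le x_2\le\dots\le x_k$ be points of $[0,1]$ with $k<\lfloor N/2\rfloor$. Then there exist two distinct CDFs $F_{\vec B}$ and $F_{\vec C}$, both with scale factor $N$, such that $F_{\vec B}(x_n)=F_{\vec C}(x_n)$ for all $n\in\{1,\dots,k\}$.
   Context: A binary digit vector of length (scale factor) $N\ge3$ is $\vec B=(b_0,\dots,b_{N-1})\in\{0,1\}^N$ with $2\le\|\vec B\|:=\sum_i b_i\le N-1$; its digit set is $D=\{i:b_i=1\}$. With $\phi_d(x)=(x+d)/N$ for $d\in D$, let $\mu_{\vec B}$ be the unique Borel probability measure with $\mu_{\vec B}=\frac{1}{\|\vec B\|}\sum_{d\in D}\mu_{\vec B}\circ\phi_d^{-1}$, supported on the attractor $C_{\vec B}\subset[0,1]$. The CDF with scale factor $N$ associated to $\vec B$ is $F_{\vec B}(x)=\mu_{\vec B}([0,x])$, $x\in[0,1]$. *)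

theory Defs
  imports "HOL-Probability.Probability"
begin

definition digit_vector :: "nat \<Rightarrow> nat list \<Rightarrow> bool" where
  "digit_vector N B \<longleftrightarrow> length B = N \<and> set B \<subseteq> {0, 1} \<and>
     2 \<le> sum_list B \<and> sum_list B \<le> N - 1"

definition digit_set :: "nat list \<Rightarrow> nat set" where
  "digit_set B = {i. i < length B \<and> B ! i = 1}"

definition phi :: "nat \<Rightarrow> nat \<Rightarrow> real \<Rightarrow> real" where
  "phi N d x = (x + real d) / real N"

definition ifs_measure :: "nat \<Rightarrow> nat list \<Rightarrow> real measure" where
  "ifs_measure N B = (THE \<mu>. sets \<mu> = sets borel \<and> prob_space \<mu> \<and>
     (\<forall>A \<in> sets borel. measure \<mu> A =
        (1 / real (sum_list B)) * (\<Sum>d\<in>digit_set B. measure \<mu> (phi N d -` A))))"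

definition cdf_B :: "nat \<Rightarrow> nat list \<Rightarrow> real \<Rightarrow> real" where
  "cdf_B N B x = measure (ifs_measure N B) {0..x}"

end

theory Submission
  imports Defs
begin

text \<open>The measure \<mu>_B is the law of a random N-ary expansion whose digits are independent
  and uniform on D; it is the only solution of the self-similarity equation because the
  equation gives char \<mu> t = G t * char \<mu> (t / N) with |G t| \<le> 1, so two solutions have
  characteristic functions differing at t by at most their difference at t / N^n \<rightarrow> 0.
  Applied to [0, y], the equation gives F_B(y) = (1/|D|) \<Sum>_{d \<in> D} \<mu>_B[-d, N y - d], and since
  \<mu>_B lives on [0, 1] every term is 0 or 1 unless \<lfloor>N y\<rfloor> = d.
  As k < N div 2, some pair a, a + 1 of digits and a third digit b avoid all \<lfloor>N x_n\<rfloor>.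
  The digit sets {a, b} and {a + 1, b} then give equal values at every x_n, but at
  (a + 1) / N the first CDF counts the digit a fully while the second gives the digit a + 1
  weight \<mu>_C[-(a + 1), 0] \<le> 1/2.\<close>

definition self_similar :: "nat \<Rightarrow> nat set \<Rightarrow> real measure \<Rightarrow> bool" where
  "self_similar N D \<mu> \<longleftrightarrow> sets \<mu> = sets borel \<and> prob_space \<mu> \<and>
     (\<forall>A \<in> sets borel. measure \<mu> A =
        (1 / real (card D)) * (\<Sum>d\<in>D. measure \<mu> (phi N d -` A)))"

lemma phi_measurable [measurable]: "phi N d \<in> borel_measurable borel"
  unfolding phi_def by measurable

lemma measurable_distr_phi:
  assumes "prob_space \<mu>" and "sets \<mu> = sets borel"
  shows "(\<lambda>d. distr \<mu> borel (phi N d)) \<in> measurable (measure_pmf p) (subprob_algebra borel)"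
proof -
  have "distr \<mu> borel (phi N d) \<in> space (subprob_algebra borel)" for d
  proof -
    have "prob_space (distr \<mu> borel (phi N d))"
      using assms(1) by (rule prob_space.prob_space_distr) (simp add: measurable_cong_sets[OF assms(2) refl])
    then show ?thesis by (simp add: space_subprob_algebra prob_space_imp_subprob_space)
  qed
  then show ?thesis
    by (simp add: measurable_cong_sets[OF sets_measure_pmf_count_space refl] measurable_count_space_eq1)
qed

lemma emeasure_bind_distr_phi:
  assumes "prob_space \<mu>" and sets: "sets \<mu> = sets borel"
    and "finite D" "D \<noteq> {}" and A: "A \<in> sets borel"
  shows "emeasure (measure_pmf (pmf_of_set D) \<bind> (\<lambda>d. distr \<mu> borel (phi N d))) A
           = ennreal ((\<Sum>d\<in>D. measure \<mu> (phi N d -` A)) / card D)"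
proof -
  interpret prob_space \<mu> by fact
  have "emeasure (measure_pmf (pmf_of_set D) \<bind> (\<lambda>d. distr \<mu> borel (phi N d))) A
      = (\<integral>\<^sup>+d. emeasure (distr \<mu> borel (phi N d)) A \<partial>measure_pmf (pmf_of_set D))"
    using A measurable_distr_phi[OF assms(1,2)] by (intro emeasure_bind) simp_all
  also have "\<dots> = (\<Sum>d\<in>D. ennreal (measure \<mu> (phi N d -` A))) / card D"
    using assms by (simp add: nn_integral_pmf_of_set emeasure_distr emeasure_eq_measure
        measurable_cong_sets[OF sets refl] sets_eq_imp_space_eq[OF sets])
  also have "\<dots> = ennreal ((\<Sum>d\<in>D. measure \<mu> (phi N d -` A)) / card D)"
    using assms by (simp add: sum_ennreal ennreal_of_nat_eq_real_of_nat divide_ennreal sum_nonneg card_gt_0_iff)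
  finally show ?thesis .
qed

lemma self_similar_iff_bind:
  assumes "prob_space \<mu>" and sets: "sets \<mu> = sets borel" and "finite D" "D \<noteq> {}"
  shows "self_similar N D \<mu> \<longleftrightarrow> \<mu> = measure_pmf (pmf_of_set D) \<bind> (\<lambda>d. distr \<mu> borel (phi N d))"
    (is "_ \<longleftrightarrow> \<mu> = ?\<nu>")
proof -
  interpret prob_space \<mu> by fact
  have sets_\<nu>: "sets ?\<nu> = sets borel"
    by (simp add: sets_bind_measurable[OF measurable_distr_phi[OF assms(1) sets]])
  have \<nu>: "measure ?\<nu> A = (1 / real (card D)) * (\<Sum>d\<in>D. measure \<mu> (phi N d -` A))"
    if "A \<in> sets borel" for A
    unfolding measure_def[of ?\<nu>] emeasure_bind_distr_phi[OF assms that]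
    by (simp add: sum_nonneg)
  show ?thesis
  proof
    assume "self_similar N D \<mu>"
    then have "measure \<mu> A = (1 / real (card D)) * (\<Sum>d\<in>D. measure \<mu> (phi N d -` A))"
      if "A \<in> sets borel" for A
      using that unfolding self_similar_def by blast
    then have "emeasure \<mu> A = emeasure ?\<nu> A" if "A \<in> sets borel" for A
      using emeasure_bind_distr_phi[OF assms that] that by (simp add: emeasure_eq_measure)
    then show "\<mu> = ?\<nu>"
      using sets sets_\<nu> by (intro measure_eqI) auto
  next
    assume eq: "\<mu> = ?\<nu>"
    show "self_similar N D \<mu>"
      unfolding self_similar_def
    proof (intro conjI ballI sets assms(1))
      fix A :: "real set"
      assume A: "A \<in> sets borel"
      have "measure \<mu> A = measure ?\<nu> A"
        by (rule arg_cong[OF eq])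
      also have "\<dots> = (1 / real (card D)) * (\<Sum>d\<in>D. measure \<mu> (phi N d -` A))"
        by (rule \<nu>[OF A])
      finally show "measure \<mu> A = (1 / real (card D)) * (\<Sum>d\<in>D. measure \<mu> (phi N d -` A))" .
    qed
  qed
qed

section \<open>Uniqueness by characteristic functions\<close>

lemma self_similar_integral:
  fixes f :: "real \<Rightarrow> real"
  assumes ss: "self_similar N D \<mu>" and "finite D" "D \<noteq> {}"
    and f: "f \<in> borel_measurable borel" and bounded: "\<And>x. \<bar>f x\<bar> \<le> B"
  shows "(\<integral>x. f x \<partial>\<mu>) = (\<Sum>d\<in>D. \<integral>x. f (phi N d x) \<partial>\<mu>) / card D"
proof -
  have sets: "sets \<mu> = sets borel" and "prob_space \<mu>"
    using ss by (auto simp: self_similar_def)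
  interpret prob_space \<mu> by fact
  let ?\<nu> = "measure_pmf (pmf_of_set D) \<bind> (\<lambda>d. distr \<mu> borel (phi N d))"
  have kernel: "(\<lambda>d. distr \<mu> borel (phi N d)) \<in> measurable (pmf_of_set D) (subprob_algebra borel)"
    by (rule measurable_distr_phi[OF \<open>prob_space \<mu>\<close> sets])
  have phi_d: "phi N d \<in> measurable \<mu> borel" for d
    by (simp add: measurable_cong_sets[OF sets refl])
  have "\<mu> = ?\<nu>"
    using ss by (rule self_similar_iff_bind[OF \<open>prob_space \<mu>\<close> sets assms(2,3), THEN iffD1])
  then have "(\<integral>x. f x \<partial>\<mu>) = (\<integral>x. f x \<partial>?\<nu>)"
    by (rule arg_cong)
  also have "\<dots> = (\<integral>d. (\<integral>x. f x \<partial>distr \<mu> borel (phi N d)) \<partial>pmf_of_set D)"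
  proof (rule integral_bind[OF f _ kernel, where B' = 1])
    show "\<bar>f x\<bar> \<le> B" for x by (rule bounded)
    show "finite_measure (measure_pmf (pmf_of_set D))"
      by (rule prob_space.finite_measure[OF prob_space_measure_pmf])
    show "AE d in pmf_of_set D. emeasure (distr \<mu> borel (phi N d)) (space (distr \<mu> borel (phi N d))) \<le> ennreal 1"
      using prob_space.emeasure_space_1[OF prob_space_distr[OF phi_d]] by simp
  qed
  also have "\<dots> = (\<Sum>d\<in>D. \<integral>x. f x \<partial>distr \<mu> borel (phi N d)) / card D"
    by (rule integral_pmf_of_set[OF assms(3,2)])
  also have "\<dots> = (\<Sum>d\<in>D. \<integral>x. f (phi N d x) \<partial>\<mu>) / card D"
    using phi_d f by (simp add: integral_distr)
  finally show ?thesis .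
qed

lemma self_similar_integral_complex:
  fixes f :: "real \<Rightarrow> complex"
  assumes ss: "self_similar N D \<mu>" and D: "finite D" "D \<noteq> {}"
    and f: "f \<in> borel_measurable borel" and bounded: "\<And>x. norm (f x) \<le> B"
  shows "(\<integral>x. f x \<partial>\<mu>) = (\<Sum>d\<in>D. \<integral>x. f (phi N d x) \<partial>\<mu>) / of_nat (card D)"
proof -
  have sets: "sets \<mu> = sets borel" and "prob_space \<mu>"
    using ss by (auto simp: self_similar_def)
  interpret prob_space \<mu> by fact
  have integrable: "integrable \<mu> (\<lambda>x. f (phi N d x))" "integrable \<mu> f" for d
    using f bounded
    by (auto intro!: integrable_const_bound[where B = B] simp: measurable_cong_sets[OF sets refl])
  have Re: "\<bar>Re (f x)\<bar> \<le> B" and Im: "\<bar>Im (f x)\<bar> \<le> B" for x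
    using abs_Re_le_cmod abs_Im_le_cmod bounded order_trans by blast+
  show ?thesis
  proof (rule complex_eqI)
    have "(\<integral>x. Re (f x) \<partial>\<mu>) = (\<Sum>d\<in>D. \<integral>x. Re (f (phi N d x)) \<partial>\<mu>) / card D"
      using f by (intro self_similar_integral[OF ss D _ Re]) measurable
    then show "Re (\<integral>x. f x \<partial>\<mu>) = Re ((\<Sum>d\<in>D. \<integral>x. f (phi N d x) \<partial>\<mu>) / of_nat (card D))"
      using integrable by simp
    have "(\<integral>x. Im (f x) \<partial>\<mu>) = (\<Sum>d\<in>D. \<integral>x. Im (f (phi N d x)) \<partial>\<mu>) / card D"
      using f by (intro self_similar_integral[OF ss D _ Im]) measurable
    then show "Im (\<integral>x. f x \<partial>\<mu>) = Im ((\<Sum>d\<in>D. \<integral>x. f (phi N d x) \<partial>\<mu>) / of_nat (card D))"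
      using integrable by simp
  qed
qed

lemma char_self_similar:
  fixes t :: real
  assumes ss: "self_similar N D \<mu>" and D: "finite D" "D \<noteq> {}" and N: "N > 0"
  shows "char \<mu> t = (\<Sum>d\<in>D. iexp (t * real d / real N)) / card D * char \<mu> (t / real N)"
proof -
  have iexp_phi: "iexp (t * phi N d x) = iexp (t * real d / real N) * iexp (t / real N * x)" for d x
    using N by (simp add: phi_def exp_add[symmetric] field_simps)
  have "char \<mu> t = (\<Sum>d\<in>D. \<integral>x. iexp (t * phi N d x) \<partial>\<mu>) / card D"
    unfolding char_def
    by (rule self_similar_integral_complex[OF ss D, where B = 1]) (simp_all add: norm_exp_i_times)
  also have "\<dots> = (\<Sum>d\<in>D. iexp (t * real d / real N) * char \<mu> (t / real N)) / card D"
    unfolding iexp_phi char_def by simp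
  finally show ?thesis
    by (simp add: sum_distrib_right)
qed

lemma norm_char_diff_self_similar_le:
  fixes t :: real
  assumes ss1: "self_similar N D \<mu>1" and ss2: "self_similar N D \<mu>2"
    and D: "finite D" "D \<noteq> {}" and N: "N > 0"
  shows "norm (char \<mu>1 t - char \<mu>2 t) \<le> norm (char \<mu>1 (t / real N) - char \<mu>2 (t / real N))"
proof -
  define G where "G = (\<Sum>d\<in>D. iexp (t * real d / real N)) / card D"
  have "norm (\<Sum>d\<in>D. iexp (t * real d / real N)) \<le> card D"
    using norm_sum[of "\<lambda>d. iexp (t * real d / real N)" D] by (simp add: norm_exp_i_times)
  then have "norm G \<le> 1"
    using D by (simp add: G_def norm_divide card_gt_0_iff)
  moreover have "char \<mu>1 t - char \<mu>2 t = G * (char \<mu>1 (t / real N) - char \<mu>2 (t / real N))"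
    using char_self_similar[OF ss1 D N, of t] char_self_similar[OF ss2 D N, of t]
    by (simp add: G_def right_diff_distrib)
  ultimately show ?thesis
    by (simp add: norm_mult mult_left_le_one_le)
qed

lemma self_similar_unique:
  assumes ss1: "self_similar N D \<mu>1" and ss2: "self_similar N D \<mu>2"
    and D: "finite D" "D \<noteq> {}" and N: "N \<ge> 2"
  shows "\<mu>1 = \<mu>2"
proof -
  have real_distribution: "real_distribution \<mu>1" "real_distribution \<mu>2"
    using ss1 ss2 by (auto simp: self_similar_def real_distribution_def real_distribution_axioms_def)
  define \<delta> where "\<delta> t = char \<mu>1 t - char \<mu>2 t" for t
  have \<delta>_le: "norm (\<delta> t) \<le> norm (\<delta> (t / real N ^ n))" for t n
  proof (induction n)
    case (Suc n)
    with norm_char_diff_self_similar_le[OF ss1 ss2 D, of "t / real N ^ n"] N show ?case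
      by (simp add: \<delta>_def field_simps)
  qed simp
  have "char \<mu>1 t = char \<mu>2 t" for t
  proof -
    have "(\<lambda>n. t / real N ^ n) \<longlonglongrightarrow> 0"
      using N by (intro LIMSEQ_divide_realpow_zero) auto
    moreover have "isCont \<delta> 0"
      unfolding \<delta>_def using real_distribution by (intro continuous_intros real_distribution.isCont_char)
    ultimately have "(\<lambda>n. norm (\<delta> (t / real N ^ n))) \<longlonglongrightarrow> norm (\<delta> 0)"
      by (intro tendsto_norm isCont_tendsto_compose[where g = \<delta>])
    moreover have "\<delta> 0 = 0"
      using real_distribution by (simp add: \<delta>_def real_distribution.char_zero)
    ultimately have "norm (\<delta> t) \<le> 0"
      using \<delta>_le by (intro LIMSEQ_le_const) auto
    then show ?thesis
      by (simp add: \<delta>_def)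
  qed
  then show ?thesis
    using Levy_uniqueness real_distribution by blast
qed

section \<open>Existence by random digit expansions\<close>

text \<open>Digits are clamped to N - 1 so that the series converges for every stream; on
  streams with digits in {..<N} the clamp has no effect.\<close>
definition digit_expansion :: "nat \<Rightarrow> nat stream \<Rightarrow> real" where
  "digit_expansion N \<omega> = (\<Sum>i. real (min (\<omega> !! i) (N - 1)) / real N ^ Suc i)"

lemma digit_expansion_term_le:
  assumes "N \<ge> 2"
  shows "\<bar>real (min (\<omega> !! i) (N - 1)) / real N ^ Suc i\<bar> \<le> (real N - 1) / real N * (1 / real N) ^ i"
proof -
  have "real (min (\<omega> !! i) (N - 1)) \<le> real N - 1"
    using assms by auto
  then have "real (min (\<omega> !! i) (N - 1)) / real N ^ Suc i \<le> (real N - 1) / real N ^ Suc i"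
    using assms by (intro divide_right_mono) auto
  also have "\<dots> = (real N - 1) / real N * (1 / real N) ^ i"
    by (simp add: power_divide field_simps)
  finally show ?thesis by simp
qed

lemma sums_max_digits:
  assumes "N \<ge> 2"
  shows "(\<lambda>i. (real N - 1) / real N * (1 / real N) ^ i) sums 1"
proof -
  have "(\<lambda>i. (1 / real N) ^ i) sums (1 / (1 - 1 / real N))"
    using assms by (intro geometric_sums) auto
  from sums_mult[OF this, of "(real N - 1) / real N"] show ?thesis
    using assms by (simp add: field_simps)
qed

lemma summable_digit_expansion:
  assumes "N \<ge> 2"
  shows "summable (\<lambda>i. real (min (\<omega> !! i) (N - 1)) / real N ^ Suc i)"
  by (rule summable_comparison_test'[OF sums_summable[OF sums_max_digits[OF assms]]])
     (use digit_expansion_term_le[OF assms] in simp)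

lemma digit_expansion_in_unit_interval:
  assumes "N \<ge> 2"
  shows "digit_expansion N \<omega> \<in> {0..1}"
proof -
  have "0 \<le> digit_expansion N \<omega>"
    unfolding digit_expansion_def by (intro suminf_nonneg summable_digit_expansion assms) auto
  moreover have "digit_expansion N \<omega> \<le> (\<Sum>i. (real N - 1) / real N * (1 / real N) ^ i)"
    unfolding digit_expansion_def using digit_expansion_term_le[OF assms]
    by (intro suminf_le summable_digit_expansion assms sums_summable[OF sums_max_digits[OF assms]])
       (simp add: abs_le_iff)
  ultimately show ?thesis
    using sums_unique[OF sums_max_digits[OF assms]] by simp
qed

lemma digit_expansion_Cons:
  assumes "N \<ge> 2"
  shows "digit_expansion N (d ## \<omega>) = phi N (min d (N - 1)) (digit_expansion N \<omega>)"
proof -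
  let ?f = "\<lambda>i. real (min ((d ## \<omega>) !! i) (N - 1)) / real N ^ Suc i"
  let ?g = "\<lambda>i. real (min (\<omega> !! i) (N - 1)) / real N ^ Suc i"
  have "(\<Sum>i. ?f (Suc i)) = suminf ?f - ?f 0"
    by (rule suminf_split_head[OF summable_digit_expansion[OF assms]])
  moreover have "(\<lambda>i. ?f (Suc i)) = (\<lambda>i. ?g i / real N)"
    by (auto simp: field_simps)
  moreover have "(\<Sum>i. ?g i / real N) = suminf ?g / real N"
    by (rule suminf_divide[OF summable_digit_expansion[OF assms]])
  ultimately have "suminf ?f = ?f 0 + suminf ?g / real N"
    by simp
  then show ?thesis
    unfolding digit_expansion_def phi_def using assms by (simp add: field_simps)
qed

lemma digit_expansion_measurable [measurable]:
  "digit_expansion N \<in> borel_measurable (stream_space (measure_pmf p))"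
  unfolding digit_expansion_def by measurable

definition expansion_measure :: "nat \<Rightarrow> nat set \<Rightarrow> real measure" where
  "expansion_measure N D = distr (stream_space (measure_pmf (pmf_of_set D))) borel (digit_expansion N)"

lemma prob_space_expansion_measure: "prob_space (expansion_measure N D)"
  unfolding expansion_measure_def
  by (intro prob_space.prob_space_distr prob_space.prob_space_stream_space prob_space_measure_pmf)
     measurable

lemma sets_expansion_measure [simp]: "sets (expansion_measure N D) = sets borel"
  by (simp add: expansion_measure_def)

lemma expansion_measure_unit_interval:
  assumes "N \<ge> 2"
  shows "measure (expansion_measure N D) {0..1} = 1"
proof -
  let ?S = "stream_space (measure_pmf (pmf_of_set D))"
  interpret prob_space ?S
    by (intro prob_space.prob_space_stream_space prob_space_measure_pmf)
  have "digit_expansion N -` {0..1} \<inter> space ?S = space ?S"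
    using digit_expansion_in_unit_interval[OF assms] by auto
  then show ?thesis
    by (simp add: expansion_measure_def measure_distr prob_space)
qed

lemma emeasure_Cons_digit_expansion:
  fixes D :: "nat set"
  assumes N: "N \<ge> 2" and d: "d < N" and A: "A \<in> sets borel"
  defines "S \<equiv> stream_space (measure_pmf (pmf_of_set D))"
  shows "emeasure S {\<omega> \<in> space S. d ## \<omega> \<in> digit_expansion N -` A \<inter> space S}
           = emeasure (distr (expansion_measure N D) borel (phi N d)) A"
proof -
  have "min d (N - 1) = d"
    using d by auto
  then have "{\<omega> \<in> space S. d ## \<omega> \<in> digit_expansion N -` A \<inter> space S}
               = digit_expansion N -` (phi N d -` A) \<inter> space S"
    by (auto simp: S_def digit_expansion_Cons[OF N] space_stream_space)
  moreover have "phi N d \<in> measurable (expansion_measure N D) borel"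
    by (simp add: measurable_cong_sets[OF sets_expansion_measure refl])
  moreover have "phi N d -` A \<in> sets borel"
    by (rule measurable_sets_borel[OF phi_measurable A])
  ultimately show ?thesis
    using A by (simp add: emeasure_distr) (simp add: S_def expansion_measure_def emeasure_distr)
qed

lemma expansion_measure_eq_bind:
  assumes N: "N \<ge> 2" and D: "finite D" "D \<noteq> {}" "D \<subseteq> {..<N}"
  defines "\<mu> \<equiv> expansion_measure N D"
  shows "\<mu> = measure_pmf (pmf_of_set D) \<bind> (\<lambda>d. distr \<mu> borel (phi N d))"
proof (rule measure_eqI)
  let ?M = "measure_pmf (pmf_of_set D)"
  let ?S = "stream_space ?M"
  have kernel: "(\<lambda>d. distr \<mu> borel (phi N d)) \<in> measurable ?M (subprob_algebra borel)"
    unfolding \<mu>_def by (intro measurable_distr_phi prob_space_expansion_measure sets_expansion_measure)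
  show "sets \<mu> = sets (?M \<bind> (\<lambda>d. distr \<mu> borel (phi N d)))"
    by (simp add: \<mu>_def sets_bind_measurable[OF kernel])
  fix A
  assume "A \<in> sets \<mu>"
  then have A: "A \<in> sets borel" by (simp add: \<mu>_def)
  have "emeasure \<mu> A = emeasure ?S (digit_expansion N -` A \<inter> space ?S)"
    unfolding \<mu>_def expansion_measure_def using A by (simp add: emeasure_distr)
  also have "\<dots> = (\<integral>\<^sup>+d. emeasure ?S {\<omega> \<in> space ?S. d ## \<omega> \<in> digit_expansion N -` A \<inter> space ?S} \<partial>?M)"
    by (intro prob_space.emeasure_stream_space[OF prob_space_measure_pmf]
        measurable_sets[OF digit_expansion_measurable A])
  also have "\<dots> = (\<integral>\<^sup>+d. emeasure (distr \<mu> borel (phi N d)) A \<partial>?M)"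
  proof (rule nn_integral_cong_AE)
    have "emeasure ?S {\<omega> \<in> space ?S. d ## \<omega> \<in> digit_expansion N -` A \<inter> space ?S}
            = emeasure (distr \<mu> borel (phi N d)) A" if "d \<in> D" for d
      unfolding \<mu>_def using that D(3) by (intro emeasure_Cons_digit_expansion[OF N _ A]) auto
    then show "AE d in ?M. emeasure ?S {\<omega> \<in> space ?S. d ## \<omega> \<in> digit_expansion N -` A \<inter> space ?S}
                 = emeasure (distr \<mu> borel (phi N d)) A"
      using D by (simp add: AE_measure_pmf_iff)
  qed
  also have "\<dots> = emeasure (?M \<bind> (\<lambda>d. distr \<mu> borel (phi N d))) A"
    using emeasure_bind[OF _ kernel A] by simp
  finally show "emeasure \<mu> A = emeasure (?M \<bind> (\<lambda>d. distr \<mu> borel (phi N d))) A" .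
qed

lemma self_similar_expansion_measure:
  assumes "N \<ge> 2" "finite D" "D \<noteq> {}" "D \<subseteq> {..<N}"
  shows "self_similar N D (expansion_measure N D)"
  using expansion_measure_eq_bind[OF assms]
  by (rule self_similar_iff_bind[OF prob_space_expansion_measure sets_expansion_measure assms(2,3), THEN iffD2])

section \<open>Evaluating F_B off the digits\<close>

lemma self_similar_measure_interval:
  assumes ss: "self_similar N D \<mu>" and N: "N > 0"
  shows "measure \<mu> {l..u} = (\<Sum>d\<in>D. measure \<mu> {real N * l - real d .. real N * u - real d}) / card D"
proof -
  have "phi N d -` {l..u} = {real N * l - real d .. real N * u - real d}" for d
    using N by (auto simp: phi_def field_simps)
  then show ?thesis
    using ss unfolding self_similar_def by simp
qed

lemma sum_list_eq_card_digit_set: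
  assumes "set B \<subseteq> {0, 1}"
  shows "sum_list B = card (digit_set B)"
proof -
  have "sum_list B = (\<Sum>i<length B. B ! i)"
    by (simp add: sum_list_sum_nth atLeast0LessThan)
  also have "\<dots> = (\<Sum>i<length B. of_bool (B ! i = 1))"
    using assms nth_mem by (intro sum.cong) fastforce+
  also have "\<dots> = card (digit_set B)"
    by (simp add: digit_set_def Int_def conj_commute)
  finally show ?thesis .
qed

lemma digit_vector_digit_set:
  assumes "digit_vector N B"
  shows "digit_set B \<subseteq> {..<N}" "finite (digit_set B)" "digit_set B \<noteq> {}"
    "sum_list B = card (digit_set B)" "N \<ge> 3"
proof -
  show "digit_set B \<subseteq> {..<N}"
    using assms by (auto simp: digit_vector_def digit_set_def)
  then show "finite (digit_set B)"
    by (rule finite_subset) simp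
  show "sum_list B = card (digit_set B)"
    using assms by (intro sum_list_eq_card_digit_set) (simp add: digit_vector_def)
  then show "digit_set B \<noteq> {}" "N \<ge> 3"
    using assms by (auto simp: digit_vector_def)
qed

lemma ifs_measure_eq_expansion_measure:
  assumes "digit_vector N B"
  shows "ifs_measure N B = expansion_measure N (digit_set B)"
proof -
  note D = digit_vector_digit_set[OF assms]
  have N: "N \<ge> 2" using D(5) by simp
  have "ifs_measure N B = (THE \<mu>. self_similar N (digit_set B) \<mu>)"
    unfolding ifs_measure_def self_similar_def D(4) ..
  also have "\<dots> = expansion_measure N (digit_set B)"
  proof (rule the_equality)
    show ss: "self_similar N (digit_set B) (expansion_measure N (digit_set B))"
      by (rule self_similar_expansion_measure[OF N D(2,3,1)])
    show "\<mu> = expansion_measure N (digit_set B)" if "self_similar N (digit_set B) \<mu>" for \<mu>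
      by (rule self_similar_unique[OF that ss D(2,3) N])
  qed
  finally show ?thesis .
qed

lemma self_similar_ifs_measure:
  assumes "digit_vector N B"
  shows "self_similar N (digit_set B) (ifs_measure N B)"
  using digit_vector_digit_set[OF assms]
  by (simp add: ifs_measure_eq_expansion_measure[OF assms] self_similar_expansion_measure)

lemma ifs_measure_unit_interval:
  assumes "digit_vector N B"
  shows "measure (ifs_measure N B) {0..1} = 1"
  using digit_vector_digit_set(5)[OF assms]
  by (simp add: ifs_measure_eq_expansion_measure[OF assms] expansion_measure_unit_interval)

lemma measure_shifted_interval:
  assumes "prob_space \<mu>" and sets: "sets \<mu> = sets borel"
    and unit: "measure \<mu> {0..1} = 1" and z: "\<lfloor>z\<rfloor> \<noteq> int d"
  shows "measure \<mu> {- real d .. z - real d} = of_bool (int d < \<lfloor>z\<rfloor>)"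
proof -
  interpret prob_space \<mu> by fact
  have AE: "AE x in \<mu>. x \<in> {0..1}"
    using unit by (intro AE_prob_1) simp
  consider "int d < \<lfloor>z\<rfloor>" | "\<lfloor>z\<rfloor> < int d"
    using z by linarith
  then show ?thesis
  proof cases
    case 1
    then have "real d + 1 \<le> z" by linarith
    then have "AE x in \<mu>. x \<in> {- real d .. z - real d}"
      by (intro eventually_mono[OF AE]) auto
    then show ?thesis
      using 1 sets by (simp add: prob_eq_1)
  next
    case 2
    then have "z < real d" by linarith
    then have "AE x in \<mu>. x \<notin> {- real d .. z - real d}"
      by (intro eventually_mono[OF AE]) auto
    then show ?thesis
      using 2 sets by (simp add: prob_eq_0)
  qed
qed

lemma cdf_B_eq_sum:
  assumes "digit_vector N B"
  shows "cdf_B N B y = (\<Sum>d\<in>digit_set B. measure (ifs_measure N B) {- real d .. real N * y - real d})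
                         / card (digit_set B)"
  using self_similar_measure_interval[OF self_similar_ifs_measure[OF assms], of 0 y]
    digit_vector_digit_set(5)[OF assms]
  by (simp add: cdf_B_def)

text \<open>Each digit d contributes 1 or 0 according as the piece [d/N, (d + 1)/N] of the attractor
  lies left or right of y.\<close>
lemma cdf_B_off_digits:
  assumes B: "digit_vector N B" and y: "\<lfloor>real N * y\<rfloor> \<notin> int ` digit_set B"
  shows "cdf_B N B y = card {d \<in> digit_set B. int d < \<lfloor>real N * y\<rfloor>} / card (digit_set B)"
proof -
  have "self_similar N (digit_set B) (ifs_measure N B)"
    by (rule self_similar_ifs_measure[OF B])
  then have "measure (ifs_measure N B) {- real d .. real N * y - real d} = of_bool (int d < \<lfloor>real N * y\<rfloor>)"
    if "d \<in> digit_set B" for d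
    using that y ifs_measure_unit_interval[OF B]
    by (intro measure_shifted_interval) (auto simp: self_similar_def)
  then show ?thesis
    using digit_vector_digit_set(2)[OF B]
    by (simp add: cdf_B_eq_sum[OF B] Int_def conj_commute)
qed

lemma self_similar_measure_atMost_zero_le:
  assumes ss: "self_similar N D \<mu>" and unit: "measure \<mu> {0..1} = 1"
    and N: "N > 0" and D: "finite D"
  shows "measure \<mu> {l..0} \<le> 1 / card D"
proof -
  interpret prob_space \<mu> using ss by (simp add: self_similar_def)
  have sets: "sets \<mu> = sets borel" using ss by (simp add: self_similar_def)
  have AE: "AE x in \<mu>. x \<in> {0..1}"
    using unit by (intro AE_prob_1) simp
  have "measure \<mu> {real N * l - real d .. - real d} \<le> of_bool (d = 0)" for d
  proof (cases "d = 0")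
    case False
    then have "AE x in \<mu>. x \<notin> {real N * l - real d .. - real d}"
      by (intro eventually_mono[OF AE]) auto
    then have "measure \<mu> {real N * l - real d .. - real d} = 0"
      using sets by (simp add: prob_eq_0)
    then show ?thesis by simp
  qed simp
  then have "(\<Sum>d\<in>D. measure \<mu> {real N * l - real d .. - real d}) \<le> (\<Sum>d\<in>D. of_bool (d = 0))"
    by (rule sum_mono)
  also have "\<dots> \<le> 1"
    unfolding of_bool_def using D by (simp add: sum.delta)
  finally show ?thesis
    using self_similar_measure_interval[OF ss N, of l 0] by (simp add: divide_right_mono)
qed

definition two_digits :: "nat \<Rightarrow> nat \<Rightarrow> nat \<Rightarrow> nat list" where
  "two_digits N p q = map (\<lambda>i. if i = p \<or> i = q then 1 else 0) [0..<N]"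

lemma digit_set_two_digits:
  assumes "p < N" "q < N"
  shows "digit_set (two_digits N p q) = {p, q}"
  using assms by (auto simp: digit_set_def two_digits_def split: if_splits)

lemma digit_vector_two_digits:
  assumes "N \<ge> 3" "p < N" "q < N" "p \<noteq> q"
  shows "digit_vector N (two_digits N p q)"
proof -
  have "set (two_digits N p q) \<subseteq> {0, 1}"
    by (auto simp: two_digits_def)
  moreover from this have "sum_list (two_digits N p q) = 2"
    using assms by (simp add: sum_list_eq_card_digit_set digit_set_two_digits)
  ultimately show ?thesis
    using assms by (simp add: digit_vector_def two_digits_def)
qed

lemma cdf_two_digits_shift_eq:
  assumes N: "N \<ge> 3" and ab: "a + 1 < N" "b < N" "b \<noteq> a" "b \<noteq> a + 1"
    and y: "\<lfloor>real N * y\<rfloor> \<notin> int ` {a, a + 1, b}"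
  shows "cdf_B N (two_digits N a b) y = cdf_B N (two_digits N (a + 1) b) y"
proof -
  let ?z = "\<lfloor>real N * y\<rfloor>"
  have "{d \<in> {a, b}. int d < ?z} = (if int a < ?z then {a} else {}) \<union> {d \<in> {b}. int d < ?z}"
    and "{d \<in> {a + 1, b}. int d < ?z} = (if int a < ?z then {a + 1} else {}) \<union> {d \<in> {b}. int d < ?z}"
    using y by auto
  then have "card {d \<in> {a, b}. int d < ?z} = card {d \<in> {a + 1, b}. int d < ?z}"
    using ab by auto
  then show ?thesis
    using ab y
    by (simp add: cdf_B_off_digits digit_vector_two_digits[OF N] digit_set_two_digits)
qed

lemma cdf_two_digits_shift_less:
  assumes N: "N \<ge> 3" and ab: "a + 1 < N" "b < N" "b \<noteq> a" "b \<noteq> a + 1"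
  defines "t \<equiv> real (a + 1) / real N"
  shows "cdf_B N (two_digits N (a + 1) b) t < cdf_B N (two_digits N a b) t"
proof -
  let ?B = "two_digits N a b" and ?C = "two_digits N (a + 1) b"
  let ?\<mu> = "ifs_measure N ?C"
  have B: "digit_vector N ?B" and C: "digit_vector N ?C"
    using ab by (auto intro!: digit_vector_two_digits[OF N])
  have Nt: "real N * t = real (a + 1)"
    using N by (simp add: t_def)
  have ss: "self_similar N {a + 1, b} ?\<mu>"
    using self_similar_ifs_measure[OF C] ab by (simp add: digit_set_two_digits)
  have unit: "measure ?\<mu> {0..1} = 1"
    by (rule ifs_measure_unit_interval[OF C])
  define v :: real where "v = of_bool (b < a + 1)"
  have "{d \<in> {a, b}. int d < int (a + 1)} = (if b < a + 1 then {a, b} else {a})"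
    by auto
  then have "cdf_B N ?B t = (1 + v) / 2"
    using ab by (simp add: cdf_B_off_digits[OF B] digit_set_two_digits Nt v_def)
  moreover have "cdf_B N ?C t = (measure ?\<mu> {- real (a + 1) .. 0} + v) / 2"
  proof -
    have "measure ?\<mu> {- real b .. real (a + 1) - real b} = v"
      using ab ss unit unfolding v_def
      by (subst measure_shifted_interval) (auto simp: self_similar_def)
    then show ?thesis
      using ab unfolding cdf_B_eq_sum[OF C] by (simp add: digit_set_two_digits Nt)
  qed
  moreover have "measure ?\<mu> {- real (a + 1) .. 0} \<le> 1 / 2"
    using self_similar_measure_atMost_zero_le[OF ss unit] N ab by simp
  ultimately show ?thesis
    by simp
qed

lemma ex_less_notin:
  assumes "finite A" "card A < n"
  shows "\<exists>i<n. i \<notin> A"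
proof (rule ccontr)
  assume "\<not> (\<exists>i<n. i \<notin> A)"
  then have "{..<n} \<subseteq> A" by auto
  then have "card {..<n} \<le> card A"
    by (rule card_mono[OF assms(1)])
  with assms(2) show False by simp
qed

text \<open>Pairing the digits as {2j, 2j + 1}, fewer than N div 2 forbidden digits leave
  some pair free.\<close>
lemma ex_free_digits:
  fixes C :: "nat set"
  assumes "finite C" "card C < N div 2" "N \<ge> 3"
  shows "\<exists>a b. a + 1 < N \<and> b < N \<and> b \<noteq> a \<and> b \<noteq> a + 1 \<and> a \<notin> C \<and> a + 1 \<notin> C \<and> b \<notin> C"
proof -
  have "card ((\<lambda>c. c div 2) ` C) < N div 2"
    using card_image_le[OF assms(1)] assms(2) by (rule le_less_trans)
  then obtain j where j: "j < N div 2" "j \<notin> (\<lambda>c. c div 2) ` C"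
    using ex_less_notin[OF finite_imageI[OF assms(1)]] by blast
  define a where "a = 2 * j"
  have a: "a + 1 < N" "a \<notin> C" "a + 1 \<notin> C"
    using j unfolding a_def by (auto simp: image_iff)
  have "card (C \<union> {a, a + 1}) \<le> card C + 2"
    using card_Un_le[of C "{a, a + 1}"] by simp
  also have "\<dots> < N"
    using assms(2,3) by linarith
  finally obtain b where "b < N" "b \<notin> C \<union> {a, a + 1}"
    using ex_less_notin[of "C \<union> {a, a + 1}"] assms(1) by blast
  with a show ?thesis by blast
qed

theorem lemma2p5:
  fixes N k :: nat and x :: "nat \<Rightarrow> real"
  assumes "N \<ge> 4"
    and "\<forall>n\<in>{1..k}. x n \<in> {0..1}"
    and "\<forall>n m. 1 \<le> n \<and> n \<le> m \<and> m \<le> k \<longrightarrow> x n \<le> x m"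
    and "k < N div 2"
  shows "\<exists>B C. digit_vector N B \<and> digit_vector N C \<and>
           (\<exists>t\<in>{0..1}. cdf_B N B t \<noteq> cdf_B N C t) \<and>
           (\<forall>n\<in>{1..k}. cdf_B N B (x n) = cdf_B N C (x n))"
proof -
  define c where "c n = nat \<lfloor>real N * x n\<rfloor>" for n
  have floor_x: "\<lfloor>real N * x n\<rfloor> = int (c n)" if "n \<in> {1..k}" for n
    using assms(2) that by (simp add: c_def)
  have N: "N \<ge> 3" using assms(1) by simp
  have "card (c ` {1..k}) < N div 2"
    using card_image_le[of "{1..k}" c] assms(4) by simp
  then obtain a b where ab: "a + 1 < N" "b < N" "b \<noteq> a" "b \<noteq> a + 1"
    and free: "a \<notin> c ` {1..k}" "a + 1 \<notin> c ` {1..k}" "b \<notin> c ` {1..k}"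
    using ex_free_digits[OF finite_imageI[OF finite_atLeastAtMost] _ N] by blast
  let ?B = "two_digits N a b" and ?C = "two_digits N (a + 1) b"
  have "digit_vector N ?B" "digit_vector N ?C"
    using ab by (auto intro!: digit_vector_two_digits[OF N])
  moreover have "real (a + 1) / real N \<in> {0..1}"
    using ab by simp
  moreover have "cdf_B N ?B (real (a + 1) / real N) \<noteq> cdf_B N ?C (real (a + 1) / real N)"
    using cdf_two_digits_shift_less[OF N ab] by simp
  moreover have "cdf_B N ?B (x n) = cdf_B N ?C (x n)" if "n \<in> {1..k}" for n
  proof (rule cdf_two_digits_shift_eq[OF N ab])
    have "c n \<in> c ` {1..k}"
      using that by (rule imageI)
    then have "c n \<notin> {a, a + 1, b}"
      using free by auto
    then show "\<lfloor>real N * x n\<rfloor> \<notin> int ` {a, a + 1, b}"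
      by (auto simp: floor_x[OF that])
  qed
  ultimately show ?thesis by blast
qed

end
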